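(* Let $\epsilon>0$ and $R\ge 0$, and set $\Lambda(\epsilon,R)=\frac{4}{\epsilon}+2R$. Let $[v_1v_2]$ be a geodesic segment in $\mathbb{H}^n$ with midpoint $m$, and let $s$ be an isometric involution of $\mathbb{H}^n$ such that $d(v_1,s(v_1))\le R$ and $d(v_2,s(v_2))\le R$. If $d(v_1,v_2)\ge \Lambda(\epsilon,R)$, then $d(m,s(m))\le\epsilon$.
   Context: $\mathbb{H}^n$ is real hyperbolic $n$-space with its hyperbolic metric $d$; an isometric involution is an isometry $s$ with $s^2=\mathrm{id}$. *)

theory Defs
  imports "HOL-Analysis.Analysis"
begin

text \<open>Real hyperbolic n-space, hyperboloid model: the point of the upper sheet
  of the hyperboloid x0^2 - |x|^2 = 1 is parametrised by its spatial part x in R^n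
  (x0 = sqrt(1 + |x|^2)). The hyperbolic distance is arcosh of minus the Minkowski
  product.\<close>

definition hdist :: "real^'n \<Rightarrow> real^'n \<Rightarrow> real" where
  "hdist x y = arcosh (sqrt (1 + (norm x)\<^sup>2) * sqrt (1 + (norm y)\<^sup>2) - inner x y)"

definition hisometry :: "(real^'n \<Rightarrow> real^'n) \<Rightarrow> bool" where
  "hisometry s \<longleftrightarrow> (\<forall>x y. hdist (s x) (s y) = hdist x y) \<and> surj s"

definition isometric_involution :: "(real^'n \<Rightarrow> real^'n) \<Rightarrow> bool" where
  "isometric_involution s \<longleftrightarrow> hisometry s \<and> (\<forall>x. s (s x) = x)"

definition geodesic_segment :: "(real \<Rightarrow> real^'n) \<Rightarrow> real \<Rightarrow> real^'n \<Rightarrow> real^'n \<Rightarrow> bool" where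
  "geodesic_segment \<gamma> L v1 v2 \<longleftrightarrow> L \<ge> 0 \<and> \<gamma> 0 = v1 \<and> \<gamma> L = v2 \<and>
     (\<forall>a\<in>{0..L}. \<forall>b\<in>{0..L}. hdist (\<gamma> a) (\<gamma> b) = \<bar>a - b\<bar>)"

definition Lambda :: "real \<Rightarrow> real \<Rightarrow> real" where
  "Lambda \<epsilon> R = 4 / \<epsilon> + 2 * R"

end

theory Submission
  imports Defs
begin

(* In the hyperboloid model a point x of H^n is the vector
   (t(x), x) of R^{n+1} with t(x) = sqrt (1 + |x|^2), and cosh d(x,y) is the
   Minkowski product B(x,y) = t(x) t(y) - <x,y>.  Everything rests on the
   reversed Cauchy-Schwarz inequality: a vector Minkowski-orthogonal to a
   timelike one is spacelike, and null only if it vanishes.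
   (1) With c = cosh(L/2), the lift of the midpoint m of [v1 v2] is
       (v1 + v2) / (2c); an isometric involution s maps it to (s v1 + s v2)/(2c).
   (2) For an involution, w = v1 - v2 - s v1 + s v2 is orthogonal to the
       timelike vector v1 + s v1, which bounds the cross term B(v1, s v2).
   Expanding B(m, s m) bilinearly then gives
       cosh d(m, s m) <= 1 + (cosh R - 1) / c^2,
   and an elementary estimate of exponentials shows that the right-hand side
   is at most cosh eps as soon as L >= 4/eps + 2R. *)

definition hyp_time :: "'a::real_inner \<Rightarrow> real" where
  "hyp_time x = sqrt (1 + (norm x)\<^sup>2)"

definition mink :: "'a::real_inner \<Rightarrow> 'a \<Rightarrow> real" where
  "mink x y = hyp_time x * hyp_time y - inner x y"

lemma hyp_time_sq: "(hyp_time x)\<^sup>2 = 1 + (norm x)\<^sup>2"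
  unfolding hyp_time_def by simp

lemma hyp_time_gt_norm: "norm x < hyp_time x"
  unfolding hyp_time_def by (rule real_less_rsqrt) simp

lemma hyp_time_pos: "0 < hyp_time x"
  using hyp_time_gt_norm[of x] norm_ge_zero[of x] by linarith

lemma inner_eq_mink: "inner x y = hyp_time x * hyp_time y - mink x y"
  unfolding mink_def by simp

lemma mink_self: "mink x x = 1"
  using hyp_time_sq[of x] unfolding mink_def power2_norm_eq_inner
  by (simp add: power2_eq_square)

lemma mink_commute: "mink x y = mink y x"
  unfolding mink_def by (simp add: inner_commute mult.commute)

text \<open>Two points of the hyperboloid have Minkowski product at least 1, so the
  arcosh in the definition of the distance is taken in its natural domain.\<close>
lemma mink_ge_1: "1 \<le> mink x y"
proof -
  have "(1 + (norm x)\<^sup>2) * (1 + (norm y)\<^sup>2) - (1 + norm x * norm y)\<^sup>2 = (norm x - norm y)\<^sup>2"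
    by (simp add: power2_eq_square algebra_simps)
  hence "(1 + norm x * norm y)\<^sup>2 \<le> (hyp_time x * hyp_time y)\<^sup>2"
    unfolding power_mult_distrib hyp_time_sq by (metis diff_ge_0_iff_ge zero_le_power2)
  hence "1 + norm x * norm y \<le> hyp_time x * hyp_time y"
    by (rule power2_le_imp_le) (use hyp_time_pos[of x] hyp_time_pos[of y] in simp)
  with norm_cauchy_schwarz[of x y] show ?thesis unfolding mink_def by linarith
qed

lemma cosh_hdist: "cosh (hdist x y) = mink x y"
  using cosh_arcosh_real[OF mink_ge_1[of x y]] unfolding hdist_def mink_def hyp_time_def .

lemma hdist_nonneg: "0 \<le> hdist x y"
  unfolding hdist_def using mink_ge_1[of x y] unfolding mink_def hyp_time_def by simp

lemma hdist_le_iff: "0 \<le> r \<Longrightarrow> hdist x y \<le> r \<longleftrightarrow> mink x y \<le> cosh r"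
  using cosh_real_nonneg_le_iff[OF hdist_nonneg, of r x y] by (simp add: cosh_hdist)

lemma hisometry_mink: "hisometry s \<Longrightarrow> mink (s x) (s y) = mink x y"
  unfolding hisometry_def by (metis cosh_hdist)

lemma geodesic_segment_mink:
  assumes "geodesic_segment \<gamma> L v1 v2"
  shows "hdist v1 v2 = L" "mink v1 v2 = 2 * (cosh (L / 2))\<^sup>2 - 1"
    "mink v1 (\<gamma> (L / 2)) = cosh (L / 2)" "mink (\<gamma> (L / 2)) v2 = cosh (L / 2)"
proof -
  from assms have L: "0 \<le> L" and ends: "\<gamma> 0 = v1" "\<gamma> L = v2"
    and dist: "\<And>a b. a \<in> {0..L} \<Longrightarrow> b \<in> {0..L} \<Longrightarrow> hdist (\<gamma> a) (\<gamma> b) = \<bar>a - b\<bar>"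
    unfolding geodesic_segment_def by auto
  show "hdist v1 v2 = L" using dist[of 0 L] L ends by simp
  thus "mink v1 v2 = 2 * (cosh (L / 2))\<^sup>2 - 1"
    using cosh_double_cosh[of "L / 2"] by (simp add: cosh_hdist[symmetric])
  show "mink v1 (\<gamma> (L / 2)) = cosh (L / 2)" "mink (\<gamma> (L / 2)) v2 = cosh (L / 2)"
    using dist[of 0 "L / 2"] dist[of "L / 2" L] L ends by (simp_all add: cosh_hdist[symmetric])
qed

text \<open>Reversed Cauchy-Schwarz: a vector \<open>(u0, u)\<close> that is Minkowski-orthogonal
  to a future causal vector \<open>(p0, p)\<close> is spacelike or null ...\<close>
lemma orthogonal_to_timelike_not_timelike:
  fixes u p :: "'a::real_inner"
  assumes "norm p \<le> p0" "0 < p0" "u0 * p0 = inner u p"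
  shows "u0\<^sup>2 \<le> (norm u)\<^sup>2"
proof -
  have "\<bar>u0\<bar> * p0 = \<bar>inner u p\<bar>" using assms(2,3) by (metis abs_mult abs_of_pos)
  also have "\<dots> \<le> norm u * norm p" by (rule Cauchy_Schwarz_ineq2)
  also have "\<dots> \<le> norm u * p0" using assms(1) by (simp add: mult_left_mono)
  finally have "\<bar>u0\<bar> \<le> norm u" using assms(2) by simp
  thus ?thesis by (metis abs_ge_zero power2_abs power_mono)
qed

text \<open>... and if the first vector is strictly timelike, a null vector orthogonal to
  it vanishes.\<close>
lemma orthogonal_to_timelike_null_eq_0:
  fixes u p :: "'a::real_inner"
  assumes "norm p < p0" "u0 * p0 = inner u p" "u0\<^sup>2 = (norm u)\<^sup>2"
  shows "u0 = 0 \<and> u = 0"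
proof -
  have nu: "norm u = \<bar>u0\<bar>" using assms(3) by (metis power2_abs power2_eq_iff_nonneg abs_ge_zero norm_ge_zero)
  have "\<bar>u0\<bar> * p0 = \<bar>inner u p\<bar>"
    using assms(1,2) norm_ge_zero[of p] by (metis abs_mult abs_of_pos le_less_trans)
  also have "\<dots> \<le> \<bar>u0\<bar> * norm p" using Cauchy_Schwarz_ineq2[of u p] by (simp add: nu)
  finally have "\<bar>u0\<bar> * (p0 - norm p) \<le> 0" by (simp add: right_diff_distrib)
  with assms(1) have "u0 = 0" by (simp add: mult_le_0_iff)
  thus ?thesis using nu by simp
qed

text \<open>The midpoint of two points at distance \<open>2 \<cdot> arcosh c\<close> is the normalised sum of
  their lifts: the difference is orthogonal to that timelike sum and null.\<close>
lemma midpoint_lift: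
  fixes a b q :: "'a::real_inner"
  assumes ab: "mink a b = 2 * c\<^sup>2 - 1" and c: "0 < c" and aq: "mink a q = c" and qb: "mink q b = c"
  shows "q = (1 / (2 * c)) *\<^sub>R (a + b) \<and> hyp_time q = (hyp_time a + hyp_time b) / (2 * c)"
proof -
  define u0 where "u0 = hyp_time q - (hyp_time a + hyp_time b) / (2 * c)"
  define u where "u = q - (1 / (2 * c)) *\<^sub>R (a + b)"
  have vals: "mink a b = 2 * c\<^sup>2 - 1" "mink b a = 2 * c\<^sup>2 - 1" "mink a q = c" "mink q a = c"
    "mink q b = c" "mink b q = c" "mink a a = 1" "mink b b = 1" "mink q q = 1"
    using assms by (simp_all add: mink_commute mink_self)
  have timelike: "norm (a + b) < hyp_time a + hyp_time b"
    using norm_triangle_ineq[of a b] hyp_time_gt_norm[of a] hyp_time_gt_norm[of b] by linarith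
  have orth: "u0 * (hyp_time a + hyp_time b) = inner u (a + b)"
    unfolding u0_def u_def
    by (simp only: inner_diff_left inner_add_left inner_add_right inner_scaleR_left,
        simp only: inner_eq_mink vals,
        use c in \<open>simp add: field_simps power2_eq_square\<close>)
  have null: "u0\<^sup>2 = (norm u)\<^sup>2"
    unfolding u0_def u_def power2_norm_eq_inner
    by (simp only: inner_diff_left inner_diff_right inner_add_left inner_add_right
          inner_scaleR_left inner_scaleR_right,
        simp only: inner_eq_mink vals,
        use c in \<open>simp add: field_simps power2_eq_square\<close>)
  from orthogonal_to_timelike_null_eq_0[OF timelike orth null] show ?thesis
    unfolding u0_def u_def by auto
qed

text \<open>For an involution preserving the Minkowski product, the vector
  \<open>a - b - s a + s b\<close> is orthogonal to the timelike vector \<open>a + s a\<close>,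
  hence not timelike; this bounds the cross term \<open>B(a, s b)\<close>.\<close>
lemma involution_cross_bound:
  fixes a b :: "'a::real_inner"
  assumes preserve: "\<And>x y. mink (s x) (s y) = mink x y" and invol: "\<And>x. s (s x) = x"
  shows "mink a (s b) \<le> mink a b - 1 + (mink a (s a) + mink b (s b)) / 2"
proof -
  define K where "K = mink a b"
  define \<alpha> where "\<alpha> = mink a (s a)"
  define \<beta> where "\<beta> = mink b (s b)"
  define X where "X = mink a (s b)"
  have swap: "mink (s a) b = X"
    unfolding X_def by (metis preserve invol)
  have vals: "mink a b = K" "mink b a = K" "mink (s a) (s b) = K" "mink (s b) (s a) = K"
    "mink a (s a) = \<alpha>" "mink (s a) a = \<alpha>" "mink b (s b) = \<beta>" "mink (s b) b = \<beta>"
    "mink a (s b) = X" "mink (s b) a = X" "mink (s a) b = X" "mink b (s a) = X"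
    "mink a a = 1" "mink b b = 1" "mink (s a) (s a) = 1" "mink (s b) (s b) = 1"
    using swap unfolding K_def \<alpha>_def \<beta>_def X_def
    by (simp_all add: preserve mink_self mink_commute[of b a] mink_commute[of "s a" a]
        mink_commute[of "s b" b] mink_commute[of "s b" a] mink_commute[of b "s a"])
  define w0 where "w0 = hyp_time a - hyp_time b - hyp_time (s a) + hyp_time (s b)"
  define w where "w = a - b - s a + s b"
  have causal: "norm (a + s a) \<le> hyp_time a + hyp_time (s a)"
    using norm_triangle_ineq[of a "s a"] hyp_time_gt_norm[of a] hyp_time_gt_norm[of "s a"] by linarith
  have pos: "0 < hyp_time a + hyp_time (s a)"
    using hyp_time_pos[of a] hyp_time_pos[of "s a"] by linarith
  have orth: "w0 * (hyp_time a + hyp_time (s a)) = inner w (a + s a)"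
    unfolding w0_def w_def
    by (simp only: inner_diff_left inner_add_left inner_add_right,
        simp only: inner_eq_mink vals,
        simp add: algebra_simps)
  have "w0\<^sup>2 - (norm w)\<^sup>2 = 4 - 4 * K - 2 * \<alpha> - 2 * \<beta> + 4 * X"
    unfolding w0_def w_def power2_norm_eq_inner
    by (simp only: inner_diff_left inner_diff_right inner_add_left inner_add_right,
        simp only: inner_eq_mink vals,
        simp add: algebra_simps power2_eq_square)
  with orthogonal_to_timelike_not_timelike[OF causal pos orth]
  have "4 - 4 * K - 2 * \<alpha> - 2 * \<beta> + 4 * X \<le> 0" by linarith
  thus ?thesis unfolding K_def \<alpha>_def \<beta>_def X_def by (simp add: field_simps)
qed

lemma midpoint_displacement:
  fixes a b m :: "'a::real_inner"
  assumes preserve: "\<And>x y. mink (s x) (s y) = mink x y" and invol: "\<And>x. s (s x) = x"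
    and c: "0 < c" and ab: "mink a b = 2 * c\<^sup>2 - 1" and am: "mink a m = c" and mb: "mink m b = c"
  shows "mink m (s m) \<le> 1 + (mink a (s a) + mink b (s b) - 2) / (2 * c\<^sup>2)"
proof -
  define k where "k = 1 / (2 * c)"
  define \<alpha> where "\<alpha> = mink a (s a)"
  define \<beta> where "\<beta> = mink b (s b)"
  define X where "X = mink a (s b)"
  have m: "m = k *\<^sub>R (a + b)" "hyp_time m = k * (hyp_time a + hyp_time b)"
    using midpoint_lift[OF ab c am mb] unfolding k_def by auto
  have sm: "s m = k *\<^sub>R (s a + s b)" "hyp_time (s m) = k * (hyp_time (s a) + hyp_time (s b))"
    using midpoint_lift[of "s a" "s b" c "s m", unfolded preserve, OF ab c am mb]
    unfolding k_def by auto
  have vals: "mink a (s a) = \<alpha>" "mink b (s b) = \<beta>" "mink a (s b) = X" "mink b (s a) = X"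
    unfolding \<alpha>_def \<beta>_def X_def by (metis preserve invol mink_commute)+
  have "mink m (s m) = k\<^sup>2 * (\<alpha> + \<beta> + 2 * X)"
    unfolding mink_def[of m] m(2) sm(2) unfolding sm(1) unfolding m(1)
    by (simp only: inner_scaleR_left inner_scaleR_right inner_add_left inner_add_right,
        simp only: inner_eq_mink vals,
        simp add: algebra_simps power2_eq_square)
  also have "\<dots> \<le> k\<^sup>2 * (4 * c\<^sup>2 - 4 + 2 * (\<alpha> + \<beta>))"
    using involution_cross_bound[of s a b, OF preserve invol] ab
    unfolding \<alpha>_def \<beta>_def X_def by (intro mult_left_mono) (simp_all add: field_simps)
  also have "\<dots> = 1 + (\<alpha> + \<beta> - 2) / (2 * c\<^sup>2)"
    unfolding k_def using c by (simp add: field_simps power2_eq_square)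
  finally show ?thesis unfolding \<alpha>_def \<beta>_def .
qed

lemma cosh_ge_quadratic: "0 \<le> (x::real) \<Longrightarrow> 1 + x\<^sup>2 / 4 \<le> cosh x"
proof -
  assume x: "0 \<le> x"
  have "1 + x + x\<^sup>2 / 2 \<le> exp x" using x by (rule exp_lower_Taylor_quadratic)
  moreover have "1 + (- x) \<le> exp (- x)" by (rule exp_ge_add_one_self)
  ultimately show ?thesis unfolding cosh_field_def by simp
qed

lemma cosh_sub_one_le: "0 \<le> (x::real) \<Longrightarrow> cosh x - 1 \<le> exp x / 2"
proof -
  assume "0 \<le> x"
  hence "exp (- x) \<le> 1" by simp
  thus ?thesis unfolding cosh_field_def add_divide_distrib by linarith
qed

lemma exp_le_4_cosh_half_sq: "exp (x::real) \<le> 4 * (cosh (x / 2))\<^sup>2"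
proof -
  have "exp (x / 2) / 2 \<le> cosh (x / 2)" unfolding cosh_field_def by simp
  hence "(exp (x / 2) / 2)\<^sup>2 \<le> (cosh (x / 2))\<^sup>2" by (intro power_mono) simp_all
  moreover have "(exp (x / 2))\<^sup>2 = exp x" by (simp add: power2_eq_square exp_add[symmetric])
  ultimately show ?thesis by (simp add: power_divide)
qed

text \<open>\<open>exp (4/\<epsilon>)\<close> more than compensates the factor \<open>\<epsilon>\<^sup>2\<close> in \<open>cosh \<epsilon> - 1\<close>.\<close>
lemma sq_mult_exp_inverse_ge: "0 < (e::real) \<Longrightarrow> 8 \<le> e\<^sup>2 * exp (4 / e)"
proof -
  assume e: "0 < e"
  have "1 + 4 / e + (4 / e)\<^sup>2 / 2 \<le> exp (4 / e)" using e by (intro exp_lower_Taylor_quadratic) simp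
  moreover have "0 \<le> 1 + 4 / e" using e by simp
  ultimately have "e\<^sup>2 * ((4 / e)\<^sup>2 / 2) \<le> e\<^sup>2 * exp (4 / e)" by (intro mult_left_mono) simp_all
  thus ?thesis using e by (simp add: power_divide)
qed

text \<open>The choice \<open>L \<ge> 4 / \<epsilon> + 2 R\<close> makes the gain \<open>cosh\<^sup>2 (L/2)\<close> beat the endpoint
  displacement \<open>cosh R - 1\<close> at scale \<open>cosh \<epsilon> - 1\<close>.\<close>
lemma displacement_budget:
  fixes \<epsilon> R L :: real
  assumes e: "0 < \<epsilon>" and R: "0 \<le> R" and L: "4 / \<epsilon> + 2 * R \<le> L"
  shows "1 + (cosh R - 1) / (cosh (L / 2))\<^sup>2 \<le> cosh \<epsilon>"
proof -
  have "cosh R - 1 \<le> exp R / 2" by (rule cosh_sub_one_le[OF R])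
  also have "\<dots> \<le> exp (2 * R) / 2" using R by simp
  also have "\<dots> \<le> (\<epsilon>\<^sup>2 / 4) * (exp (2 * R) * exp (4 / \<epsilon>) / 4)"
    using sq_mult_exp_inverse_ge[OF e] by (simp add: field_simps)
  also have "\<dots> \<le> (cosh \<epsilon> - 1) * (exp L / 4)"
  proof (rule mult_mono)
    show "exp (2 * R) * exp (4 / \<epsilon>) / 4 \<le> exp L / 4"
      using L by (simp add: exp_add[symmetric] add.commute)
  qed (use cosh_ge_quadratic[of \<epsilon>] cosh_real_ge_1[of \<epsilon>] e in simp_all)
  also have "\<dots> \<le> (cosh \<epsilon> - 1) * (cosh (L / 2))\<^sup>2"
    using exp_le_4_cosh_half_sq[of L] cosh_real_ge_1[of \<epsilon>] by (intro mult_left_mono) simp_all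
  finally have "(cosh R - 1) / (cosh (L / 2))\<^sup>2 \<le> cosh \<epsilon> - 1"
    by (simp add: pos_divide_le_eq)
  thus ?thesis by simp
qed

theorem mainTheorem4:
  fixes \<epsilon> R L :: real and \<gamma> :: "real \<Rightarrow> real^'n" and v1 v2 m :: "real^'n"
    and s :: "real^'n \<Rightarrow> real^'n"
  assumes "\<epsilon> > 0" and "R \<ge> 0"
    and "geodesic_segment \<gamma> L v1 v2" and "m = \<gamma> (L / 2)"
    and "isometric_involution s"
    and "hdist v1 (s v1) \<le> R" and "hdist v2 (s v2) \<le> R"
    and "hdist v1 v2 \<ge> Lambda \<epsilon> R"
  shows "hdist m (s m) \<le> \<epsilon>"
proof -
  define c where "c = cosh (L / 2)"
  have c: "0 < c" unfolding c_def by simp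
  note seg = geodesic_segment_mink[OF assms(3), folded c_def assms(4)]
  have s: "\<And>x y. mink (s x) (s y) = mink x y" "\<And>x. s (s x) = x"
    using assms(5) hisometry_mink unfolding isometric_involution_def by auto
  have ends_moved: "mink v1 (s v1) \<le> cosh R" "mink v2 (s v2) \<le> cosh R"
    using assms(2,6,7) hdist_le_iff by auto
  have "mink m (s m) \<le> 1 + (mink v1 (s v1) + mink v2 (s v2) - 2) / (2 * c\<^sup>2)"
    by (rule midpoint_displacement[OF s c seg(2-4)])
  also have "\<dots> \<le> 1 + (2 * cosh R - 2) / (2 * c\<^sup>2)"
    using ends_moved by (intro add_left_mono divide_right_mono) simp_all
  also have "\<dots> = 1 + (cosh R - 1) / c\<^sup>2"
    using c by (simp add: field_simps)
  also have "\<dots> \<le> cosh \<epsilon>"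
    using displacement_budget[OF assms(1,2)] assms(8) seg(1) by (simp add: Lambda_def c_def)
  finally show ?thesis using hdist_le_iff[of \<epsilon> m "s m"] assms(1) by simp
qed

end
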